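(* Let $\Omega_1\subseteq\mathbb C$ be path-connected and $\Omega_2\subseteq\mathbb C$ bounded. If $T:\mathbb C_n[z]\to\mathbb C[z]$ is a linear operator mapping every polynomial of degree exactly $n$ in $\pi_n(\Omega_1)$ into $\pi(\Omega_2)$ (in particular never to $0$), then all polynomials $T(f)$, with $f$ of degree exactly $n$ in $\pi_n(\Omega_1)$, have the same degree.
   Context: For $\Omega\subseteq\mathbb C$, $\pi(\Omega)$ is the set of non-zero univariate complex polynomials all of whose zeros lie in $\Omega$ (non-zero constants included), and $\pi_n(\Omega)$ its subset of polynomials of degree at most $n$. *)

theory Defs
  imports "HOL-Analysis.Analysis" "HOL-Computational_Algebra.Polynomial"
begin

definition poly_pi :: "complex set \<Rightarrow> complex poly set" where
  "poly_pi \<Omega> = {p. p \<noteq> 0 \<and> (\<forall>z. poly p z = 0 \<longrightarrow> z \<in> \<Omega>)}"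

definition poly_pi_n :: "nat \<Rightarrow> complex set \<Rightarrow> complex poly set" where
  "poly_pi_n n \<Omega> = {p \<in> poly_pi \<Omega>. degree p \<le> n}"

definition linear_on_Cn :: "nat \<Rightarrow> (complex poly \<Rightarrow> complex poly) \<Rightarrow> bool" where
  "linear_on_Cn n T \<longleftrightarrow>
     (\<forall>p q. degree p \<le> n \<longrightarrow> degree q \<le> n \<longrightarrow> T (p + q) = T p + T q) \<and>
     (\<forall>c p. degree p \<le> n \<longrightarrow> T (smult c p) = smult c (T p))"

end

theory Submission
  imports Defs "HOL-Computational_Algebra.Fundamental_Theorem_Algebra"
begin

text \<open>
  Fix all roots but one: by linearity, \<open>w \<mapsto> T ((z - w) q)\<close> is a pencil \<open>A - w B\<close>, and
  by hypothesis the roots of all \<open>A - w B\<close> with \<open>w \<in> \<Omega>1\<close> lie in a fixed disc of radius \<open>R\<close>,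
  so their coefficients are bounded by \<open>|lead_coeff| (1 + R)^degree\<close>. Suppose the degree
  drops below \<open>m = max (degree A) (degree B)\<close> at \<open>w = a\<close>. For \<open>w \<noteq> a\<close> the leading
  coefficient is then \<open>(a - w) coeff B m\<close>, which tends to \<open>0\<close> as \<open>w \<rightarrow> a\<close>, whereas the
  coefficient at \<open>degree (A - a B)\<close> tends to the nonzero leading coefficient of \<open>A - a B\<close>.
  A connected \<open>\<Omega>1\<close> with two points has no isolated points, so the degree never drops:
  moving one root inside \<open>\<Omega>1\<close> does not change the degree of the image, and any two
  polynomials of degree \<open>n\<close> in \<open>\<pi>\<^sub>n(\<Omega>1)\<close> are joined by moving one root at a time.
\<close>

lemma replacement_invariant_mset_eq:
  assumes replace: "\<And>x y M. x \<in> S \<Longrightarrow> y \<in> S \<Longrightarrow> set_mset M \<subseteq> S \<Longrightarrow> Suc (size M) = n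
      \<Longrightarrow> F (add_mset x M) = F (add_mset y M)"
    and "set_mset M \<subseteq> S" "set_mset N \<subseteq> S" "size M = n" "size N = n"
  shows "F M = F N"
proof -
  have "F (L + M) = F (L + N)"
    if "set_mset L \<subseteq> S" "set_mset M \<subseteq> S" "set_mset N \<subseteq> S" "size L + size M = n" "size N = size M"
    for L M N
    using that
  proof (induction M arbitrary: L N)
    case empty
    then show ?case by simp
  next
    case (add x M)
    then obtain y N' where N: "N = add_mset y N'"
      by (metis size_eq_Suc_imp_eq_union size_add_mset)
    have "F (L + add_mset x M) = F (add_mset x (L + M))" by simp
    also have "\<dots> = F (add_mset y (L + M))"
      using add.prems N by (intro replace) simp_all
    also have "\<dots> = F (add_mset y L + M)" by simp
    also have "\<dots> = F (add_mset y L + N')"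
      using add.prems N by (intro add.IH) simp_all
    also have "\<dots> = F (L + N)" using N by simp
    finally show ?case .
  qed
  from this[of "{#}" M N] show ?thesis using assms(2-) by simp
qed

lemma degree_prod_linear_factors: "degree (\<Prod>a\<in>#A. [:-a, 1::'a::idom:]) = size A"
proof (induction A)
  case (add x A)
  have "(\<Prod>a\<in>#A. [:-a, 1::'a:]) \<noteq> 0"
    by (auto simp: prod_mset_zero_iff)
  then show ?case
    using add.IH by (simp add: degree_mult_eq del: mult_pCons_left)
qed simp

lemma prod_linear_factors_in_poly_pi:
  assumes "set_mset A \<subseteq> \<Omega>"
  shows "(\<Prod>a\<in>#A. [:-a, 1:]) \<in> poly_pi \<Omega>"
  using assms by (auto simp: poly_pi_def poly_prod_mset)

lemma norm_coeff_prod_linear_factors_le: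
  fixes A :: "complex multiset"
  assumes "\<And>a. a \<in># A \<Longrightarrow> norm a \<le> R"
  shows "norm (coeff (\<Prod>a\<in>#A. [:-a, 1:]) k) \<le> (1 + R) ^ size A"
  using assms
proof (induction A arbitrary: k)
  case empty
  then show ?case by (cases k) auto
next
  case (add a A)
  let ?q = "\<Prod>a\<in>#A. [:-a, 1:]"
  have R: "norm a \<le> R" and IH: "\<And>k. norm (coeff ?q k) \<le> (1 + R) ^ size A"
    using add by auto
  have "0 \<le> R" using R norm_ge_zero order_trans by blast
  have "coeff (\<Prod>a\<in>#add_mset a A. [:-a, 1:]) k = - a * coeff ?q k + coeff (pCons 0 ?q) k"
    by (simp add: mult_pCons_left)
  then have "norm (coeff (\<Prod>a\<in>#add_mset a A. [:-a, 1:]) k)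
      \<le> norm a * norm (coeff ?q k) + norm (coeff (pCons 0 ?q) k)"
    by (metis norm_minus_cancel norm_mult norm_triangle_ineq)
  also have "\<dots> \<le> R * (1 + R) ^ size A + (1 + R) ^ size A"
  proof (rule add_mono)
    show "norm a * norm (coeff ?q k) \<le> R * (1 + R) ^ size A"
      using IH R \<open>0 \<le> R\<close> by (intro mult_mono) auto
    show "norm (coeff (pCons 0 ?q) k) \<le> (1 + R) ^ size A"
      using IH \<open>0 \<le> R\<close> by (cases k) auto
  qed
  also have "\<dots> = (1 + R) ^ size (add_mset a A)"
    by (simp add: algebra_simps)
  finally show ?case .
qed

lemma norm_coeff_le_lead_coeff:
  fixes p :: "complex poly"
  assumes "p \<noteq> 0" "\<And>z. poly p z = 0 \<Longrightarrow> norm z \<le> R"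
  shows "norm (coeff p k) \<le> norm (lead_coeff p) * (1 + R) ^ degree p"
proof -
  have "norm (coeff (\<Prod>a\<in>#proots p. [:-a, 1:]) k) \<le> (1 + R) ^ degree p"
    using norm_coeff_prod_linear_factors_le[of "proots p" R k] assms
    by (simp add: size_proots_complex)
  then show ?thesis
    by (subst (1) complex_poly_decompose_multiset [symmetric])
       (simp add: norm_mult mult_left_mono)
qed

lemma degree_pencil_le:
  fixes A B :: "'a::comm_ring poly"
  shows "degree (A - smult w B) \<le> max (degree A) (degree B)"
  using degree_diff_le_max[of A "smult w B"] degree_smult_le[of w B] by linarith

lemma pencil_degree_drop:
  fixes A B :: "'a::idom poly"
  defines "m \<equiv> max (degree A) (degree B)"
  assumes drop: "degree (A - smult a B) < m" and "w \<noteq> a"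
  shows "coeff (A - smult w B) m = (a - w) * coeff B m" and "degree (A - smult w B) = m"
proof -
  have A: "coeff A m = a * coeff B m"
    using coeff_eq_0[OF drop] by simp
  have B: "coeff B m \<noteq> 0"
  proof
    assume "coeff B m = 0"
    with A have "coeff A m = 0" by simp
    moreover have "m = degree A \<or> m = degree B"
      unfolding m_def by (simp add: max_def)
    ultimately have "m = 0"
      using \<open>coeff B m = 0\<close> by (metis leading_coeff_0_iff degree_0)
    with drop show False by simp
  qed
  show C: "coeff (A - smult w B) m = (a - w) * coeff B m"
    using A by (simp add: algebra_simps)
  have "m \<le> degree (A - smult w B)"
    using B C \<open>w \<noteq> a\<close> by (intro le_degree) simp
  then show "degree (A - smult w B) = m"
    using degree_pencil_le[of A w B] unfolding m_def by linarith
qed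

lemma degree_pencil_eq_max:
  fixes A B :: "complex poly"
  assumes pencil: "\<forall>w\<in>S. A - smult w B \<in> poly_pi \<Omega>"
    and "bounded \<Omega>" and "a \<in> S" and "a islimpt S"
  shows "degree (A - smult a B) = max (degree A) (degree B)"
proof (rule ccontr)
  define m where "m = max (degree A) (degree B)"
  define k where "k = degree (A - smult a B)"
  assume "degree (A - smult a B) \<noteq> max (degree A) (degree B)"
  then have drop: "k < m"
    using degree_pencil_le[of A a B] unfolding k_def m_def by linarith
  obtain R where R: "\<And>z. z \<in> \<Omega> \<Longrightarrow> norm z \<le> R"
    using \<open>bounded \<Omega>\<close> by (auto simp: bounded_iff)
  define C where "C = norm (coeff B m) * (1 + R) ^ m"
  have "norm (coeff (A - smult w B) k) \<le> norm (a - w) * C" if "w \<in> S" "w \<noteq> a" for w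
  proof -
    have "A - smult w B \<noteq> 0" "\<And>z. poly (A - smult w B) z = 0 \<Longrightarrow> norm z \<le> R"
      using pencil that R unfolding poly_pi_def by auto
    then have "norm (coeff (A - smult w B) k)
        \<le> norm (lead_coeff (A - smult w B)) * (1 + R) ^ degree (A - smult w B)"
      by (rule norm_coeff_le_lead_coeff)
    also have "\<dots> = norm (a - w) * C"
      using pencil_degree_drop[OF drop[unfolded k_def m_def] \<open>w \<noteq> a\<close>]
      by (simp add: C_def m_def norm_mult)
    finally show ?thesis .
  qed
  then have "\<forall>\<^sub>F w in at a within S. norm (coeff (A - smult w B) k) \<le> norm (a - w) * C"
    by (auto simp: eventually_at_filter)
  moreover have "((\<lambda>w. norm (a - w) * C) \<longlongrightarrow> 0) (at a within S)"
    by (auto intro!: tendsto_eq_intros)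
  ultimately have "((\<lambda>w. coeff (A - smult w B) k) \<longlongrightarrow> 0) (at a within S)"
    by (rule Lim_null_comparison)
  moreover have "((\<lambda>w. coeff (A - smult w B) k) \<longlongrightarrow> coeff (A - smult a B) k) (at a within S)"
    by (simp add: coeff_diff) (intro tendsto_intros)
  ultimately have "lead_coeff (A - smult a B) = 0"
    using \<open>a islimpt S\<close> tendsto_unique trivial_limit_within unfolding k_def by blast
  moreover have "A - smult a B \<noteq> 0"
    using pencil \<open>a \<in> S\<close> unfolding poly_pi_def by auto
  ultimately show False
    using leading_coeff_0_iff by blast
qed

lemma linear_on_Cn_add:
  "linear_on_Cn n T \<Longrightarrow> degree p \<le> n \<Longrightarrow> degree q \<le> n \<Longrightarrow> T (p + q) = T p + T q"
  unfolding linear_on_Cn_def by blast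

lemma linear_on_Cn_smult:
  "linear_on_Cn n T \<Longrightarrow> degree p \<le> n \<Longrightarrow> T (smult c p) = smult c (T p)"
  unfolding linear_on_Cn_def by blast

lemma linear_on_Cn_linear_factor:
  assumes "linear_on_Cn n T" "degree q < n"
  shows "T ([:-w, 1:] * q) = T (pCons 0 q) - smult w (T q)"
proof -
  have "[:-w, 1:] * q = pCons 0 q + smult (-w) q"
    by (simp add: mult_pCons_left)
  moreover have "degree (pCons 0 q) \<le> n" "degree (smult (-w) q) \<le> n" "degree q \<le> n"
    using assms(2) by (auto simp: degree_pCons_eq_if)
  ultimately show ?thesis
    using linear_on_Cn_add[OF assms(1)] linear_on_Cn_smult[OF assms(1)]
    by (simp del: smult_minus_left mult_pCons_left) simp
qed

lemma degree_image_eq_image_prod_roots: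
  fixes f :: "complex poly"
  assumes "linear_on_Cn n T" "f \<noteq> 0" "degree f \<le> n"
  shows "degree (T f) = degree (T (\<Prod>a\<in>#proots f. [:-a, 1:]))"
proof -
  define r where "r = (\<Prod>a\<in>#proots f. [:-a, 1:])"
  have "degree r \<le> n"
    using assms(3) by (simp add: r_def degree_prod_linear_factors size_proots_complex)
  have "T f = T (smult (lead_coeff f) r)"
    by (simp only: r_def complex_poly_decompose_multiset)
  also have "\<dots> = smult (lead_coeff f) (T r)"
    using linear_on_Cn_smult[OF assms(1) \<open>degree r \<le> n\<close>] .
  finally show ?thesis
    using assms(2) by (simp add: r_def)
qed

lemma degree_image_replace_root:
  fixes T :: "complex poly \<Rightarrow> complex poly"
  assumes lin: "linear_on_Cn n T" and "bounded \<Omega>2" and "connected \<Omega>1"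
    and image: "\<forall>f. f \<in> poly_pi_n n \<Omega>1 \<and> degree f = n \<longrightarrow> T f \<in> poly_pi \<Omega>2"
    and M: "set_mset M \<subseteq> \<Omega>1" "Suc (size M) = n" and "x \<in> \<Omega>1" "y \<in> \<Omega>1"
  shows "degree (T (\<Prod>a\<in>#add_mset x M. [:-a, 1:])) = degree (T (\<Prod>a\<in>#add_mset y M. [:-a, 1:]))"
proof (cases "x = y")
  case False
  define q where "q = (\<Prod>a\<in>#M. [:-a, 1:])"
  have image_eq: "T (\<Prod>a\<in>#add_mset w M. [:-a, 1:]) = T (pCons 0 q) - smult w (T q)" for w
    unfolding q_def prod_mset.add_mset
    using linear_on_Cn_linear_factor[OF lin] M by (simp add: degree_prod_linear_factors)
  have "T (pCons 0 q) - smult w (T q) \<in> poly_pi \<Omega>2" if "w \<in> \<Omega>1" for w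
  proof -
    define f where "f = (\<Prod>a\<in>#add_mset w M. [:-a, 1:])"
    have "f \<in> poly_pi \<Omega>1"
      unfolding f_def using M that by (intro prod_linear_factors_in_poly_pi) auto
    moreover have "degree f = n"
      unfolding f_def using M by (simp only: degree_prod_linear_factors size_add_mset)
    ultimately have "T f \<in> poly_pi \<Omega>2"
      using image by (simp add: poly_pi_n_def)
    then show ?thesis
      unfolding f_def image_eq .
  qed
  moreover have "a islimpt \<Omega>1" if "a \<in> \<Omega>1" for a
    using connected_imp_perfect[OF \<open>connected \<Omega>1\<close> that] False \<open>x \<in> \<Omega>1\<close> \<open>y \<in> \<Omega>1\<close> by blast
  ultimately show ?thesis
    unfolding image_eq using degree_pencil_eq_max \<open>bounded \<Omega>2\<close> \<open>x \<in> \<Omega>1\<close> \<open>y \<in> \<Omega>1\<close>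
    by metis
qed simp

theorem mainTheorem19:
  fixes \<Omega>1 \<Omega>2 :: "complex set" and n :: nat and T :: "complex poly \<Rightarrow> complex poly"
  assumes "path_connected \<Omega>1"
    and "bounded \<Omega>2"
    and "linear_on_Cn n T"
    and "\<forall>f. f \<in> poly_pi_n n \<Omega>1 \<and> degree f = n \<longrightarrow> T f \<in> poly_pi \<Omega>2"
  shows "\<forall>f g. f \<in> poly_pi_n n \<Omega>1 \<and> degree f = n \<and> g \<in> poly_pi_n n \<Omega>1 \<and> degree g = n
           \<longrightarrow> degree (T f) = degree (T g)"
proof (intro allI impI)
  fix f g
  assume fg: "f \<in> poly_pi_n n \<Omega>1 \<and> degree f = n \<and> g \<in> poly_pi_n n \<Omega>1 \<and> degree g = n"
  define F where "F M = degree (T (\<Prod>a\<in>#M. [:-a, 1:]))" for M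
  have roots: "set_mset (proots p) \<subseteq> \<Omega>1" "size (proots p) = n" "degree (T p) = F (proots p)"
    if "p \<in> poly_pi_n n \<Omega>1" "degree p = n" for p
  proof -
    have "p \<noteq> 0" "\<forall>z. poly p z = 0 \<longrightarrow> z \<in> \<Omega>1"
      using that(1) by (auto simp: poly_pi_n_def poly_pi_def)
    then show "set_mset (proots p) \<subseteq> \<Omega>1" "size (proots p) = n" "degree (T p) = F (proots p)"
      using that(2) degree_image_eq_image_prod_roots[OF assms(3)]
      by (auto simp: F_def size_proots_complex)
  qed
  have "F (proots f) = F (proots g)"
  proof (rule replacement_invariant_mset_eq)
    show "F (add_mset x M) = F (add_mset y M)"
      if "x \<in> \<Omega>1" "y \<in> \<Omega>1" "set_mset M \<subseteq> \<Omega>1" "Suc (size M) = n" for x y M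
      unfolding F_def using that
      by (intro degree_image_replace_root[OF assms(3,2) path_connected_imp_connected[OF assms(1)] assms(4)])
  qed (use roots fg in auto)
  then show "degree (T f) = degree (T g)"
    using roots(3) fg by simp
qed

end
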